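(* Let $d\ge1$ and let $f:\mathbb{R}^d\setminus\{0\}\to\mathbb{R}$ be differentiable and scale-invariant ($f(c\mathbf{w})=f(\mathbf{w})$ for all $\mathbf{w}\ne0$, $c>0$). Fix $\eta>0$, $\beta\in[0,1)$ and $\mathbf{w}_0\neq 0$. Let $(\mathbf{w}^{\mathrm{GD}}_t)_{t\ge0}$ be the vanilla gradient descent iterates $\mathbf{w}^{\mathrm{GD}}_0=\mathbf{w}_0$, $\mathbf{w}^{\mathrm{GD}}_{t+1}=\mathbf{w}^{\mathrm{GD}}_t-\eta\nabla f(\mathbf{w}^{\mathrm{GD}}_t)$, and let $(\mathbf{w}^{\mathrm{GDM}}_t)_{t\ge0}$ be the momentum gradient descent iterates $\mathbf{w}^{\mathrm{GDM}}_0=\mathbf{w}_0$, $\mathbf{p}_{-1}=0$, $\mathbf{p}_t=\beta\mathbf{p}_{t-1}+\nabla f(\mathbf{w}^{\mathrm{GDM}}_t)$, $\mathbf{w}^{\mathrm{GDM}}_{t+1}=\mathbf{w}^{\mathrm{GDM}}_t-\eta\mathbf{p}_t$ (all iterates assumed nonzero). Assume that the update norms of the two methods coincide, i.e. $\|\nabla f(\mathbf{w}^{\mathrm{GD}}_t)\|_2=\|\mathbf{p}_t\|_2$ for every $t\ge0$, and that $0<\sum_{t\ge0}\|\mathbf{p}_t\|_2^2<\infty$. Then $$\frac{\|\mathbf{w}_t^{\mathrm{GDM}}\|_2^2-\|\mathbf{w}_0\|_2^2}{\|\mathbf{w}_t^{\mathrm{GD}}\|_2^2-\|\mathbf{w}_0\|_2^2}\longrightarrow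 1+\frac{2\beta}{1-\beta}\quad\text{as } t\to\infty.$$
   Context: For scale-invariant differentiable $f$, $\mathbf{w}\cdot\nabla f(\mathbf{w})=0$, so vanilla gradient descent satisfies $\|\mathbf{w}^{\mathrm{GD}}_{t+1}\|_2^2=\|\mathbf{w}^{\mathrm{GD}}_t\|_2^2+\eta^2\|\nabla f(\mathbf{w}^{\mathrm{GD}}_t)\|_2^2$. The ratio is considered for $t$ large enough that the denominator is positive. *)

theory Defs
  imports "HOL-Analysis.Analysis"
begin

end

theory Submission
  imports Defs
begin

text \<open>Differentiating \<open>c \<mapsto> f (c *\<^sub>R w)\<close> at \<open>c = 1\<close> shows that the gradient of a
  scale-invariant function is orthogonal to its argument. Hence a plain gradient step only
  adds \<open>\<eta>\<^sup>2 \<parallel>\<nabla>f\<parallel>\<^sup>2\<close> to the squared norm, while a momentum step additionally adds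
  \<open>2 \<eta>\<^sup>2 b\<^sub>t\<close> with \<open>b\<^sub>t = -\<langle>w\<^sub>t, p\<^sub>t\<rangle> / \<eta>\<close>. Orthogonality of \<open>w\<^sub>t\<^sub>+\<^sub>1\<close> to the new gradient gives
  \<open>b\<^sub>t\<^sub>+\<^sub>1 = \<beta> (b\<^sub>t + \<parallel>p\<^sub>t\<parallel>\<^sup>2)\<close>, so \<open>\<Sum> b\<^sub>t = \<beta>/(1-\<beta>) \<Sum> \<parallel>p\<^sub>t\<parallel>\<^sup>2\<close>. Since the update norms of the
  two methods agree, the ratio of the norm increments tends to \<open>1 + 2\<beta>/(1-\<beta>)\<close>.\<close>

lemma scale_invariant_gderiv_orthogonal:
  fixes f :: "'a::real_inner \<Rightarrow> real"
  assumes deriv: "GDERIV f w :> g" and "w \<noteq> 0"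
    and scale_inv: "\<And>c. c > 0 \<Longrightarrow> f (c *\<^sub>R w) = f w"
  shows "inner w g = 0"
proof -
  have "((\<lambda>c::real. c *\<^sub>R w) has_derivative (\<lambda>h. h *\<^sub>R w)) (at 1)"
    by (auto intro!: derivative_eq_intros)
  moreover have "(f has_derivative (\<lambda>h. inner h g)) (at (1 *\<^sub>R w))"
    using deriv by (simp add: gderiv_def)
  ultimately have "((\<lambda>c. f (c *\<^sub>R w)) has_derivative (\<lambda>h. inner (h *\<^sub>R w) g)) (at 1)"
    using diff_chain_at by (fastforce simp: o_def)
  then have "((\<lambda>c. f w) has_derivative (\<lambda>h. inner (h *\<^sub>R w) g)) (at (1::real))"
    by (rule has_derivative_transform_within_open[where s="{0<..}"]) (auto simp: scale_inv)
  then have "(\<lambda>h::real. inner (h *\<^sub>R w) g) = (\<lambda>h. 0)"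
    using has_derivative_unique has_derivative_const by blast
  then show ?thesis
    by (metis scaleR_one)
qed

lemma power2_norm_diff_scaleR:
  fixes x y :: "'a::real_inner"
  shows "(norm (x - c *\<^sub>R y))\<^sup>2 = (norm x)\<^sup>2 - 2 * c * inner x y + c\<^sup>2 * (norm y)\<^sup>2"
  unfolding power2_norm_eq_inner
  by (simp add: inner_diff_left inner_diff_right inner_commute power2_eq_square algebra_simps)

lemma power2_norm_iterate:
  fixes w u :: "nat \<Rightarrow> 'a::real_inner"
  assumes step: "\<And>t. w (Suc t) = w t - \<eta> *\<^sub>R u t"
  shows "(norm (w t))\<^sup>2 = (norm (w 0))\<^sup>2 + \<eta>\<^sup>2 * (\<Sum>s<t. (norm (u s))\<^sup>2)
           - 2 * \<eta> * (\<Sum>s<t. inner (w s) (u s))"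
  by (induction t) (simp_all add: step power2_norm_diff_scaleR algebra_simps)

lemma inner_momentum_update:
  fixes w p g :: "'a::real_inner"
  assumes "inner (w - \<eta> *\<^sub>R p) g = 0"
  shows "inner (w - \<eta> *\<^sub>R p) (\<beta> *\<^sub>R p + g) = \<beta> * (inner w p - \<eta> * (norm p)\<^sup>2)"
  using assms by (simp add: inner_add_right inner_diff_left power2_norm_eq_inner)

lemma momentum_recurrence_summable:
  fixes b q :: "nat \<Rightarrow> real"
  assumes "0 \<le> \<beta>" "\<beta> < 1"
    and q_nonneg: "\<And>t. q t \<ge> 0" and q_sums: "q sums S"
    and b0: "b 0 = 0" and b_step: "\<And>t. b (Suc t) = \<beta> * (b t + q t)"
  shows "summable b"
proof -
  define B where "B n = (\<Sum>t<n. b t)" for n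
  define Q where "Q n = (\<Sum>t<n. q t)" for n
  have b_nonneg: "b t \<ge> 0" for t
    by (induction t) (use assms in \<open>auto simp: b0 b_step\<close>)
  have Q_le: "Q n \<le> S" for n
    unfolding Q_def sums_unique[OF q_sums]
    by (rule sum_le_suminf) (use q_nonneg q_sums sums_summable in auto)
  have B_Suc: "B (Suc n) = \<beta> * (B n + Q n)" for n
  proof (induction n)
    case 0
    then show ?case by (simp add: B_def Q_def b0)
  next
    case (Suc n)
    have "B (Suc (Suc n)) = B (Suc n) + b (Suc n)"
      by (simp add: B_def)
    also have "\<dots> = \<beta> * (B n + Q n) + \<beta> * (b n + q n)"
      by (simp add: Suc b_step)
    also have "\<dots> = \<beta> * (B (Suc n) + Q (Suc n))"
      by (simp add: B_def Q_def algebra_simps)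
    finally show ?case .
  qed
  have "B n \<le> \<beta> * S / (1 - \<beta>)" for n
  proof -
    have B_mono: "B n \<le> B (Suc n)"
      using b_nonneg by (simp add: B_def)
    have "B (Suc n) = \<beta> * (B n + Q n)"
      by (rule B_Suc)
    also have "\<dots> \<le> \<beta> * (B (Suc n) + S)"
      using B_mono Q_le[of n] \<open>0 \<le> \<beta>\<close> by (intro mult_left_mono) auto
    finally have "B (Suc n) \<le> \<beta> * S / (1 - \<beta>)"
      using \<open>\<beta> < 1\<close> by (simp add: field_simps)
    with B_mono show ?thesis
      by linarith
  qed
  then show ?thesis
    using b_nonneg by (intro summableI_nonneg_bounded) (auto simp: B_def)
qed

lemma momentum_recurrence_sums:
  fixes b q :: "nat \<Rightarrow> real"
  assumes "0 \<le> \<beta>" "\<beta> < 1"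
    and "\<And>t. q t \<ge> 0" and q_sums: "q sums S"
    and b0: "b 0 = 0" and b_step: "\<And>t. b (Suc t) = \<beta> * (b t + q t)"
  shows "b sums (\<beta> * S / (1 - \<beta>))"
proof -
  have b_sums: "b sums suminf b"
    using momentum_recurrence_summable[OF assms] by (rule summable_sums)
  then have "(\<lambda>t. b (Suc t)) sums suminf b"
    by (simp add: sums_Suc_iff b0)
  moreover have "(\<lambda>t. b (Suc t)) sums (\<beta> * (suminf b + S))"
    unfolding b_step by (intro sums_mult sums_add b_sums q_sums)
  ultimately have "suminf b = \<beta> * (suminf b + S)"
    using sums_unique2 by blast
  then have "suminf b = \<beta> * S / (1 - \<beta>)"
    using \<open>\<beta> < 1\<close> by (simp add: field_simps)
  then show ?thesis
    using b_sums by simp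
qed

theorem mainTheorem2:
  fixes f :: "real ^ 'd \<Rightarrow> real"
    and grad :: "real ^ 'd \<Rightarrow> real ^ 'd"
    and \<eta> \<beta> :: real
    and w0 :: "real ^ 'd"
    and wGD wGDM p :: "nat \<Rightarrow> real ^ 'd"
  assumes grad: "\<And>w. w \<noteq> 0 \<Longrightarrow> GDERIV f w :> grad w"
    and scale_inv: "\<And>w c. w \<noteq> 0 \<Longrightarrow> c > 0 \<Longrightarrow> f (c *\<^sub>R w) = f w"
    and eta: "\<eta> > 0"
    and beta: "0 \<le> \<beta>" "\<beta> < 1"
    and w0: "w0 \<noteq> 0"
    and GD0: "wGD 0 = w0"
    and GDstep: "\<And>t. wGD (Suc t) = wGD t - \<eta> *\<^sub>R grad (wGD t)"
    and GDM0: "wGDM 0 = w0"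
    and p0: "p 0 = grad (wGDM 0)"
    and pstep: "\<And>t. p (Suc t) = \<beta> *\<^sub>R p t + grad (wGDM (Suc t))"
    and GDMstep: "\<And>t. wGDM (Suc t) = wGDM t - \<eta> *\<^sub>R p t"
    and GD_nz: "\<And>t. wGD t \<noteq> 0"
    and GDM_nz: "\<And>t. wGDM t \<noteq> 0"
    and norms_eq: "\<And>t. norm (grad (wGD t)) = norm (p t)"
    and summ: "summable (\<lambda>t. (norm (p t))\<^sup>2)"
    and pos: "(\<Sum>t. (norm (p t))\<^sup>2) > 0"
  shows "(\<lambda>t. ((norm (wGDM t))\<^sup>2 - (norm w0)\<^sup>2) / ((norm (wGD t))\<^sup>2 - (norm w0)\<^sup>2))
           \<longlonglongrightarrow> 1 + 2 * \<beta> / (1 - \<beta>)"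
proof -
  define q where "q t = (norm (p t))\<^sup>2" for t
  define b where "b t = - inner (wGDM t) (p t) / \<eta>" for t
  define S where "S = (\<Sum>t. q t)"
  have orth: "inner w (grad w) = 0" if "w \<noteq> 0" for w
    using scale_invariant_gderiv_orthogonal[OF grad] scale_inv that by blast
  have b_step: "b (Suc t) = \<beta> * (b t + q t)" for t
    using inner_momentum_update[of "wGDM t" \<eta> "p t", folded GDMstep, OF orth[OF GDM_nz]] eta
    by (simp add: b_def q_def pstep field_simps)
  have q_sums: "q sums S"
    using summ by (simp add: S_def q_def[abs_def] summable_sums)
  have b_sums: "b sums (\<beta> * S / (1 - \<beta>))"
    using beta q_sums b_step orth[OF w0]
    by (intro momentum_recurrence_sums) (auto simp: q_def b_def GDM0 p0)
  have GD_norm: "(norm (wGD t))\<^sup>2 - (norm w0)\<^sup>2 = \<eta>\<^sup>2 * (\<Sum>s<t. q s)" for t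
    using power2_norm_iterate[of wGD, OF GDstep] orth[OF GD_nz] by (simp add: GD0 norms_eq q_def)
  have GDM_norm: "(norm (wGDM t))\<^sup>2 - (norm w0)\<^sup>2 = \<eta>\<^sup>2 * ((\<Sum>s<t. q s) + 2 * (\<Sum>s<t. b s))" for t
  proof -
    have "(\<Sum>s<t. inner (wGDM s) (p s)) = - (\<eta> * (\<Sum>s<t. b s))"
      using eta by (simp add: b_def sum_distrib_left sum_negf)
    then show ?thesis
      using power2_norm_iterate[of wGDM, OF GDMstep, where t=t]
      by (simp add: GDM0 q_def power2_eq_square algebra_simps)
  qed
  have "(\<lambda>t. ((\<Sum>s<t. q s) + 2 * (\<Sum>s<t. b s)) / (\<Sum>s<t. q s))
          \<longlonglongrightarrow> (S + 2 * (\<beta> * S / (1 - \<beta>))) / S"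
    using pos q_sums b_sums by (intro tendsto_intros) (auto simp: sums_def S_def q_def)
  moreover have "(S + 2 * (\<beta> * S / (1 - \<beta>))) / S = 1 + 2 * \<beta> / (1 - \<beta>)"
    using pos beta by (simp add: S_def q_def field_simps)
  ultimately show ?thesis
    using eta by (simp add: GD_norm GDM_norm)
qed

end
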